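(* Fix $c\in\mathcal{C}'$ with $\mathcal{S}(c)\setminus\{c\}\neq\emptyset$ and arbitrary values of all messages, and let $b_t$, $t\in\mathcal{T}$, be the corresponding beliefs. Let $\boldsymbol\lambda_{c,\mathcal{S}(c)}$ be the current block of messages out of $c$ and $\boldsymbol\lambda^*_{c,\mathcal{S}(c)}$ the updated block. Then the dual decrease $d(c)=g_c(\boldsymbol\lambda_{c,\mathcal{S}(c)})-g_c(\boldsymbol\lambda^*_{c,\mathcal{S}(c)})$ satisfies $$d(c)=\max_{\mathbf{x}_c}b_c(\mathbf{x}_c)+\sum_{s\in\mathcal{S}(c)\setminus\{c\}}\max_{\mathbf{x}_s}b_s(\mathbf{x}_s)-\max_{\mathbf{x}_c}\Big[b_c(\mathbf{x}_c)+\sum_{s\in\mathcal{S}(c)\setminus\{c\}}b_s(\mathbf{x}_s)\Big]\geqslant 0.$$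
   Context: Let $\mathcal{V}=\{1,\dots,n\}$; each variable $x_i$ takes values in a finite set, and for $s\subseteq\mathcal{V}$ write $\mathbf{x}_s=(x_i)_{i\in s}$. Let $\mathcal{C}$ be a collection of subsets of $\mathcal{V}$ with real potentials $\theta_c(\mathbf{x}_c)$, $c\in\mathcal{C}$. Let $\mathcal{C}'$ be a collection of subsets of $\mathcal{V}$ and for each $c\in\mathcal{C}'$ let $\mathcal{S}(c)$ be a collection of subsets of $c$ (possibly containing $c$), with $\mathcal{C}'\cup\bigcup_{c\in\mathcal{C}'}\mathcal{S}(c)\supseteq\mathcal{C}$; put $\mathcal{T}=\mathcal{C}'\cup\bigcup_{c\in\mathcal{C}'}\mathcal{S}(c)$. Messages are reals $\lambda_{c\to s}(\mathbf{x}_s)$, $c\in\mathcal{C}'$, $s\in\mathcal{S}(c)\setminus\{c\}$. For $t\in\mathcal{T}$: $\hat\theta_t=\mathbb{1}(t\in\mathcal{C})\theta_t$; $\gamma_t(\mathbf{x}_t)=\mathbb{1}(t\in\mathcal{C}')\sum_{\hat s\in\mathcal{S}(t)\setminus\{t\}}\lambda_{t\to\hat s}(\mathbf{x}_{\hat s})$; $\lambda_t(\mathbf{x}_t)=\sum_{c'\in\mathcal{C}':\,t\in\mathcal{S}(c')\setminus\{c'\}}\lambda_{c'\to t}(\mathbf{x}_t)$; beliefs $b_t=\hat\theta_t+\lambda_t-\gamma_t$. For $s\in\mathcal{S}(c)\setminus\{c\}$, $\lambda_s^{-c}(\mathbf{x}_s)=\sum_{\hat c\in\mathcal{C}':\,\hat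 c\ne c,\ s\in\mathcal{S}(\hat c)\setminus\{\hat c\}}\lambda_{\hat c\to s}(\mathbf{x}_s)$. With all messages not of the form $\lambda_{c\to s}$ held fixed, $g_c$ is the function of the block $\boldsymbol\lambda_{c,\mathcal{S}(c)}=(\lambda_{c\to s}(\mathbf{x}_s))_{s\in\mathcal{S}(c)\setminus\{c\}}$ given by $g_c=\max_{\mathbf{x}_c}[\hat\theta_c(\mathbf{x}_c)-\sum_{s\in\mathcal{S}(c)\setminus\{c\}}\lambda_{c\to s}(\mathbf{x}_s)+\lambda_c(\mathbf{x}_c)]+\sum_{s\in\mathcal{S}(c)\setminus\{c\}}\max_{\mathbf{x}_s}[\hat\theta_s(\mathbf{x}_s)-\gamma_s(\mathbf{x}_s)+\lambda^{-c}_s(\mathbf{x}_s)+\lambda_{c\to s}(\mathbf{x}_s)]$. The updated block is $\lambda^*_{c\to s}(\mathbf{x}_s)=-\hat\theta_s(\mathbf{x}_s)+\gamma_s(\mathbf{x}_s)-\lambda_s^{-c}(\mathbf{x}_s)+\frac{1}{|\mathcal{S}(c)\setminus\{c\}|}\max_{\mathbf{x}_{c\setminus s}}[\hat\theta_c(\mathbf{x}_c)+\lambda_c(\mathbf{x}_c)+\sum_{\hat s\in\mathcal{S}(c)\setminus\{c\}}(\hat\theta_{\hat s}-\gamma_{\hat s}+\lambda^{-c}_{\hat s})(\mathbf{x}_{\hat s})]$. *)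

theory Defs
  imports Complex_Main "HOL-Library.FuncSet"
begin

(* Configurations (joint assignments) x_s of the variables in s:
   functions defined on s with x i \<in> D i, undefined outside s.
   x_s of a configuration x_c (s \<subseteq> c) is  restrict x s. *)
definition cfg :: "(nat \<Rightarrow> 'v set) \<Rightarrow> nat set \<Rightarrow> (nat \<Rightarrow> 'v) set" where
  "cfg D s = PiE s D"

definition theta_hat :: "nat set set \<Rightarrow> (nat set \<Rightarrow> (nat \<Rightarrow> 'v) \<Rightarrow> real)
    \<Rightarrow> nat set \<Rightarrow> (nat \<Rightarrow> 'v) \<Rightarrow> real" where
  "theta_hat C \<theta> t x = (if t \<in> C then \<theta> t x else 0)"

(* gamma_t(x_t) = 1(t \<in> C') \<Sum>_{s \<in> S(t)\{t}} lambda_{t\<rightarrow>s}(x_s);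
   messages: lam c s x_s = lambda_{c\<rightarrow>s}(x_s) *)
definition gamma :: "nat set set \<Rightarrow> (nat set \<Rightarrow> nat set set)
    \<Rightarrow> (nat set \<Rightarrow> nat set \<Rightarrow> (nat \<Rightarrow> 'v) \<Rightarrow> real) \<Rightarrow> nat set \<Rightarrow> (nat \<Rightarrow> 'v) \<Rightarrow> real" where
  "gamma C' S lam t x = (if t \<in> C' then (\<Sum>s\<in>S t - {t}. lam t s (restrict x s)) else 0)"

definition lam_in :: "nat set set \<Rightarrow> (nat set \<Rightarrow> nat set set)
    \<Rightarrow> (nat set \<Rightarrow> nat set \<Rightarrow> (nat \<Rightarrow> 'v) \<Rightarrow> real) \<Rightarrow> nat set \<Rightarrow> (nat \<Rightarrow> 'v) \<Rightarrow> real" where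
  "lam_in C' S lam t x = (\<Sum>c'\<in>{c'\<in>C'. t \<in> S c' - {c'}}. lam c' t x)"

definition lam_minus :: "nat set set \<Rightarrow> (nat set \<Rightarrow> nat set set)
    \<Rightarrow> (nat set \<Rightarrow> nat set \<Rightarrow> (nat \<Rightarrow> 'v) \<Rightarrow> real) \<Rightarrow> nat set \<Rightarrow> nat set \<Rightarrow> (nat \<Rightarrow> 'v) \<Rightarrow> real" where
  "lam_minus C' S lam c s x = (\<Sum>c'\<in>{c'\<in>C'. c' \<noteq> c \<and> s \<in> S c' - {c'}}. lam c' s x)"

definition belief :: "nat set set \<Rightarrow> nat set set \<Rightarrow> (nat set \<Rightarrow> nat set set)
    \<Rightarrow> (nat set \<Rightarrow> (nat \<Rightarrow> 'v) \<Rightarrow> real)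
    \<Rightarrow> (nat set \<Rightarrow> nat set \<Rightarrow> (nat \<Rightarrow> 'v) \<Rightarrow> real) \<Rightarrow> nat set \<Rightarrow> (nat \<Rightarrow> 'v) \<Rightarrow> real" where
  "belief C C' S \<theta> lam t x = theta_hat C \<theta> t x + lam_in C' S lam t x - gamma C' S lam t x"

(* g_c as a function of the block blk s x_s = lambda_{c\<rightarrow>s}(x_s), s \<in> S(c)\{c};
   all other messages are taken from lam (held fixed). *)
definition g_block :: "nat set set \<Rightarrow> nat set set \<Rightarrow> (nat set \<Rightarrow> nat set set)
    \<Rightarrow> (nat set \<Rightarrow> (nat \<Rightarrow> 'v) \<Rightarrow> real) \<Rightarrow> (nat \<Rightarrow> 'v set)
    \<Rightarrow> (nat set \<Rightarrow> nat set \<Rightarrow> (nat \<Rightarrow> 'v) \<Rightarrow> real) \<Rightarrow> nat set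
    \<Rightarrow> (nat set \<Rightarrow> (nat \<Rightarrow> 'v) \<Rightarrow> real) \<Rightarrow> real" where
  "g_block C C' S \<theta> D lam c blk =
     Max ((\<lambda>x. theta_hat C \<theta> c x - (\<Sum>s\<in>S c - {c}. blk s (restrict x s)) + lam_in C' S lam c x)
            ` cfg D c)
     + (\<Sum>s\<in>S c - {c}. Max ((\<lambda>x. theta_hat C \<theta> s x - gamma C' S lam s x
                                    + lam_minus C' S lam c s x + blk s x) ` cfg D s))"

definition lam_star :: "nat set set \<Rightarrow> nat set set \<Rightarrow> (nat set \<Rightarrow> nat set set)
    \<Rightarrow> (nat set \<Rightarrow> (nat \<Rightarrow> 'v) \<Rightarrow> real) \<Rightarrow> (nat \<Rightarrow> 'v set)
    \<Rightarrow> (nat set \<Rightarrow> nat set \<Rightarrow> (nat \<Rightarrow> 'v) \<Rightarrow> real) \<Rightarrow> nat set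
    \<Rightarrow> nat set \<Rightarrow> (nat \<Rightarrow> 'v) \<Rightarrow> real" where
  "lam_star C C' S \<theta> D lam c s xs =
     - theta_hat C \<theta> s xs + gamma C' S lam s xs - lam_minus C' S lam c s xs
     + (1 / real (card (S c - {c}))) *
       Max ((\<lambda>x. theta_hat C \<theta> c x + lam_in C' S lam c x
                 + (\<Sum>s'\<in>S c - {c}. theta_hat C \<theta> s' (restrict x s')
                       - gamma C' S lam s' (restrict x s') + lam_minus C' S lam c s' (restrict x s')))
            ` {x \<in> cfg D c. restrict x s = xs})"

end

theory Submission
  imports Defs
begin

text \<open>The joint belief \<open>b\<^sub>c(x\<^sub>c) + \<Sum>\<^sub>s b\<^sub>s(x\<^sub>s)\<close> does not involve the messages out of \<open>c\<close>, and at
  the current block \<open>g\<^sub>c\<close> is just \<open>max b\<^sub>c + \<Sum>\<^sub>s max b\<^sub>s\<close>. The updated block spreads the joint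
  belief evenly over its max-marginals: with \<open>m = |S(c) - {c}|\<close> the \<open>s\<close>-term of \<open>g\<^sub>c\<close> becomes the
  max-marginal divided by \<open>m\<close>, and the \<open>c\<close>-term becomes the joint belief minus the average of
  its max-marginals. Both maxima are attained at a common joint maximiser, where every
  max-marginal equals the joint maximum; so \<open>g\<^sub>c\<close> at the updated block is the joint maximum.
  Nonnegativity of the decrease is subadditivity of the maximum.\<close>

lemma Max_fiber_le_Max:
  assumes "finite X" "y \<in> r ` X"
  shows "Max (F ` {x \<in> X. r x = y}) \<le> Max (F ` X)"
  using assms by (intro Max_mono) auto

lemma le_Max_fiber:
  assumes "finite X" "x \<in> X"
  shows "F x \<le> Max (F ` {x' \<in> X. r x' = r x})"
  using assms by (intro Max_ge) auto

lemma Max_fiber_of_argmax: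
  assumes "finite X" "x\<^sub>0 \<in> X" "F x\<^sub>0 = Max (F ` X)"
  shows "Max (F ` {x \<in> X. r x = r x\<^sub>0}) = Max (F ` X)"
  using Max_fiber_le_Max[OF assms(1), of "r x\<^sub>0" r F] le_Max_fiber[OF assms(1,2), of F r] assms(2,3)
  by auto

lemma Max_image_attained:
  assumes "finite X" "X \<noteq> {}"
  obtains x\<^sub>0 where "x\<^sub>0 \<in> X" "F x\<^sub>0 = Max (F ` X)"
proof -
  have "Max (F ` X) \<in> F ` X"
    using assms by (intro Max_in) auto
  then obtain x\<^sub>0 where "x\<^sub>0 \<in> X" "Max (F ` X) = F x\<^sub>0"
    by (rule imageE)
  then show thesis
    using that by simp
qed

lemma Max_Max_fiber:
  assumes "finite X" "r ` X = Y"
  shows "Max ((\<lambda>y. Max (F ` {x \<in> X. r x = y})) ` Y) = Max (F ` X)"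
proof (cases "X = {}")
  case True
  then show ?thesis
    using assms(2) by simp
next
  case False
  obtain x\<^sub>0 where x\<^sub>0: "x\<^sub>0 \<in> X" "F x\<^sub>0 = Max (F ` X)"
    by (rule Max_image_attained[OF assms(1) False])
  show ?thesis
    unfolding assms(2)[symmetric]
  proof (rule Max_eqI)
    show "finite ((\<lambda>y. Max (F ` {x \<in> X. r x = y})) ` r ` X)"
      using assms(1) by simp
    show "v \<le> Max (F ` X)" if v: "v \<in> (\<lambda>y. Max (F ` {x \<in> X. r x = y})) ` r ` X" for v
    proof -
      obtain x where "x \<in> X" "v = Max (F ` {x' \<in> X. r x' = r x})"
        using v by auto
      then show ?thesis
        using Max_fiber_le_Max[OF assms(1), of "r x" r F] by simp
    qed
    show "Max (F ` X) \<in> (\<lambda>y. Max (F ` {x \<in> X. r x = y})) ` r ` X"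
      using Max_fiber_of_argmax[OF assms(1) x\<^sub>0, of r] x\<^sub>0(1) by (intro image_eqI) auto
  qed
qed

lemma Max_minus_mean_Max_fiber:
  fixes F :: "'a \<Rightarrow> 'c::linordered_field"
  assumes "finite X" "X \<noteq> {}" "finite K" "K \<noteq> {}"
  shows "Max ((\<lambda>x. F x - (\<Sum>s\<in>K. Max (F ` {x' \<in> X. r s x' = r s x})) / of_nat (card K)) ` X) = 0"
proof (rule Max_eqI)
  have m: "of_nat (card K) > (0::'c)"
    using assms(3,4) by (simp add: card_gt_0_iff)
  show "finite ((\<lambda>x. F x - (\<Sum>s\<in>K. Max (F ` {x' \<in> X. r s x' = r s x})) / of_nat (card K)) ` X)"
    using assms(1) by simp
  show "v \<le> 0" if v: "v \<in> (\<lambda>x. F x - (\<Sum>s\<in>K. Max (F ` {x' \<in> X. r s x' = r s x})) / of_nat (card K)) ` X" for v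
  proof -
    obtain x where x: "x \<in> X" "v = F x - (\<Sum>s\<in>K. Max (F ` {x' \<in> X. r s x' = r s x})) / of_nat (card K)"
      using v by auto
    have "(\<Sum>s\<in>K. F x) \<le> (\<Sum>s\<in>K. Max (F ` {x' \<in> X. r s x' = r s x}))"
      by (intro sum_mono le_Max_fiber[OF assms(1) x(1)])
    then have "F x \<le> (\<Sum>s\<in>K. Max (F ` {x' \<in> X. r s x' = r s x})) / of_nat (card K)"
      using m by (simp add: field_simps)
    then show ?thesis
      using x(2) by simp
  qed
  obtain x\<^sub>0 where x\<^sub>0: "x\<^sub>0 \<in> X" "F x\<^sub>0 = Max (F ` X)"
    by (rule Max_image_attained[OF assms(1,2)])
  have "Max (F ` {x' \<in> X. r s x' = r s x\<^sub>0}) = F x\<^sub>0" for s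
    using Max_fiber_of_argmax[OF assms(1) x\<^sub>0, of "r s"] x\<^sub>0(2) by simp
  then have "(\<Sum>s\<in>K. Max (F ` {x' \<in> X. r s x' = r s x\<^sub>0})) = of_nat (card K) * F x\<^sub>0"
    by simp
  then have "F x\<^sub>0 - (\<Sum>s\<in>K. Max (F ` {x' \<in> X. r s x' = r s x\<^sub>0})) / of_nat (card K) = 0"
    using m by simp
  then show "0 \<in> (\<lambda>x. F x - (\<Sum>s\<in>K. Max (F ` {x' \<in> X. r s x' = r s x})) / of_nat (card K)) ` X"
    using x\<^sub>0(1) by (intro image_eqI[where x = x\<^sub>0]) simp_all
qed

text \<open>The abstract form of the block update: \<open>A\<close> plays \<open>\<theta>\<^sub>c + \<lambda>\<^sub>c\<close>, \<open>B s\<close> plays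
  \<open>\<theta>\<^sub>s - \<gamma>\<^sub>s + \<lambda>\<^sub>s\<^sup>-\<^sup>c\<close>, \<open>r s\<close> is restriction to \<open>s\<close> and \<open>blk\<close> the updated block.\<close>

lemma Max_block_update_eq:
  fixes A :: "'a \<Rightarrow> 'c::linordered_field" and B blk :: "'k \<Rightarrow> 'b \<Rightarrow> 'c"
    and K :: "'k set" and r :: "'k \<Rightarrow> 'a \<Rightarrow> 'b"
  defines "F \<equiv> \<lambda>x. A x + (\<Sum>s\<in>K. B s (r s x))"
  assumes X: "finite X" "X \<noteq> {}" and K: "finite K" "K \<noteq> {}"
    and r: "\<And>s. s \<in> K \<Longrightarrow> r s ` X = Y s"
    and blk: "\<And>s y. s \<in> K \<Longrightarrow> y \<in> Y s \<Longrightarrow>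
      blk s y = - B s y + 1 / of_nat (card K) * Max (F ` {x \<in> X. r s x = y})"
  shows "Max ((\<lambda>x. A x - (\<Sum>s\<in>K. blk s (r s x))) ` X) + (\<Sum>s\<in>K. Max ((\<lambda>y. B s y + blk s y) ` Y s))
    = Max (F ` X)"
proof -
  define M where "M s y = Max (F ` {x \<in> X. r s x = y})" for s y
  have m: "of_nat (card K) > (0::'c)"
    using K by (simp add: card_gt_0_iff)
  have r_in: "r s x \<in> Y s" if "s \<in> K" "x \<in> X" for s x
    using r[OF that(1)] that(2) by blast
  have source: "A x - (\<Sum>s\<in>K. blk s (r s x)) = F x - (\<Sum>s\<in>K. M s (r s x)) / of_nat (card K)" if "x \<in> X" for x
  proof -
    have "(\<Sum>s\<in>K. blk s (r s x)) = (\<Sum>s\<in>K. M s (r s x) / of_nat (card K) - B s (r s x))"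
      using blk r_in that unfolding M_def by (intro sum.cong) auto
    then show ?thesis
      unfolding F_def by (simp add: sum_subtractf sum_divide_distrib)
  qed
  have target: "Max ((\<lambda>y. B s y + blk s y) ` Y s) = Max (F ` X) / of_nat (card K)" if s: "s \<in> K" for s
  proof -
    have mono: "mono (\<lambda>t::'c. t / of_nat (card K))"
      using m by (simp add: mono_def divide_right_mono)
    have M_fin: "finite (M s ` Y s)" and M_ne: "M s ` Y s \<noteq> {}"
      using X by (simp_all flip: r[OF s])
    have "Max ((\<lambda>y. B s y + blk s y) ` Y s) = Max ((\<lambda>t. t / of_nat (card K)) ` M s ` Y s)"
      using blk[OF s] unfolding M_def by (simp add: image_image cong: image_cong)
    also have "\<dots> = Max (M s ` Y s) / of_nat (card K)"
      using mono_Max_commute[OF mono M_fin M_ne] by simp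
    also have "Max (M s ` Y s) = Max (F ` X)"
      unfolding M_def by (rule Max_Max_fiber[OF X(1) r[OF s]])
    finally show ?thesis .
  qed
  have "Max ((\<lambda>x. A x - (\<Sum>s\<in>K. blk s (r s x))) ` X) = 0"
    using Max_minus_mean_Max_fiber[OF X K, of F r] source unfolding M_def by (simp cong: image_cong)
  then show ?thesis
    using target m by simp
qed

lemma Max_add_sum_le_add_sum_Max:
  fixes f :: "'a \<Rightarrow> 'c::linordered_ab_group_add" and g :: "'k \<Rightarrow> 'b \<Rightarrow> 'c"
  assumes "finite X" "X \<noteq> {}" "\<And>s. s \<in> K \<Longrightarrow> finite (Y s)"
    and "\<And>s x. s \<in> K \<Longrightarrow> x \<in> X \<Longrightarrow> r s x \<in> Y s"
  shows "Max ((\<lambda>x. f x + (\<Sum>s\<in>K. g s (r s x))) ` X) \<le> Max (f ` X) + (\<Sum>s\<in>K. Max (g s ` Y s))"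
proof -
  have "f x + (\<Sum>s\<in>K. g s (r s x)) \<le> Max (f ` X) + (\<Sum>s\<in>K. Max (g s ` Y s))" if "x \<in> X" for x
    using assms that by (intro add_mono sum_mono Max_ge) auto
  then show ?thesis
    using assms(1,2) by (simp add: Max_le_iff)
qed

lemma finite_cfg:
  assumes "finite s" "\<And>i. i \<in> s \<Longrightarrow> finite (D i)"
  shows "finite (cfg D s)"
  unfolding cfg_def using assms by (rule finite_PiE)

lemma cfg_nonempty:
  assumes "\<And>i. i \<in> s \<Longrightarrow> D i \<noteq> {}"
  shows "cfg D s \<noteq> {}"
  unfolding cfg_def using assms by (simp add: PiE_eq_empty_iff)

lemma restrict_image_cfg:
  assumes "s \<subseteq> c" "cfg D c \<noteq> {}"
  shows "(\<lambda>x. restrict x s) ` cfg D c = cfg D s"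
proof
  show "(\<lambda>x. restrict x s) ` cfg D c \<subseteq> cfg D s"
  proof
    fix w assume "w \<in> (\<lambda>x. restrict x s) ` cfg D c"
    then obtain x where x: "x \<in> cfg D c" "w = restrict x s"
      by blast
    then have "\<forall>i\<in>s. x i \<in> D i"
      using assms(1) unfolding cfg_def by (auto dest: PiE_mem)
    then show "w \<in> cfg D s"
      unfolding x(2) cfg_def by (simp add: restrict_PiE_iff)
  qed
  show "cfg D s \<subseteq> (\<lambda>x. restrict x s) ` cfg D c"
  proof
    fix y assume y: "y \<in> cfg D s"
    obtain z where z: "z \<in> cfg D c"
      using assms(2) by blast
    define x where "x = restrict (\<lambda>i. if i \<in> s then y i else z i) c"
    have "\<forall>i\<in>c. (if i \<in> s then y i else z i) \<in> D i"
      using y z unfolding cfg_def by (auto dest: PiE_mem)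
    then have "x \<in> cfg D c"
      unfolding x_def cfg_def by (simp only: restrict_PiE_iff)
    moreover have "y = restrict x s"
    proof
      fix i
      show "y i = restrict x s i"
        using y assms(1) PiE_arb[of y s D i] unfolding x_def cfg_def by (cases "i \<in> s") auto
    qed
    ultimately show "y \<in> (\<lambda>x. restrict x s) ` cfg D c"
      by (intro rev_image_eqI[where x = x])
  qed
qed

lemma belief_source:
  assumes "c \<in> C'"
  shows "belief C C' S \<theta> lam c x
    = theta_hat C \<theta> c x + lam_in C' S lam c x - (\<Sum>s\<in>S c - {c}. lam c s (restrict x s))"
  using assms by (simp add: belief_def gamma_def)

lemma belief_target:
  assumes "finite C'" "c \<in> C'" "s \<in> S c - {c}"
  shows "belief C C' S \<theta> lam s y
    = theta_hat C \<theta> s y - gamma C' S lam s y + lam_minus C' S lam c s y + lam c s y"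
proof -
  have "{c' \<in> C'. s \<in> S c' - {c'}} = insert c {c' \<in> C'. c' \<noteq> c \<and> s \<in> S c' - {c'}}"
    using assms(2,3) by auto
  then have "lam_in C' S lam s y = lam c s y + lam_minus C' S lam c s y"
    unfolding lam_in_def lam_minus_def using assms(1) by simp
  then show ?thesis
    by (simp add: belief_def)
qed

lemma belief_joint:
  assumes "finite C'" "c \<in> C'"
  shows "belief C C' S \<theta> lam c x + (\<Sum>s\<in>S c - {c}. belief C C' S \<theta> lam s (restrict x s))
    = theta_hat C \<theta> c x + lam_in C' S lam c x
      + (\<Sum>s\<in>S c - {c}. theta_hat C \<theta> s (restrict x s) - gamma C' S lam s (restrict x s)
                         + lam_minus C' S lam c s (restrict x s))"
proof -
  have "(\<Sum>s\<in>S c - {c}. belief C C' S \<theta> lam s (restrict x s))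
    = (\<Sum>s\<in>S c - {c}. theta_hat C \<theta> s (restrict x s) - gamma C' S lam s (restrict x s)
         + lam_minus C' S lam c s (restrict x s) + lam c s (restrict x s))"
    using belief_target[OF assms] by (rule sum.cong[OF refl])
  then show ?thesis
    by (simp add: belief_source[OF assms(2)] sum.distrib)
qed

lemma g_block_current:
  assumes "finite C'" "c \<in> C'"
  shows "g_block C C' S \<theta> D lam c (lam c)
    = Max (belief C C' S \<theta> lam c ` cfg D c) + (\<Sum>s\<in>S c - {c}. Max (belief C C' S \<theta> lam s ` cfg D s))"
proof -
  have source: "(\<lambda>x. theta_hat C \<theta> c x - (\<Sum>s\<in>S c - {c}. lam c s (restrict x s)) + lam_in C' S lam c x)
    = belief C C' S \<theta> lam c"
    by (simp add: belief_source[OF assms(2)] fun_eq_iff)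
  have target: "(\<lambda>y. theta_hat C \<theta> s y - gamma C' S lam s y + lam_minus C' S lam c s y + lam c s y)
    = belief C C' S \<theta> lam s" if "s \<in> S c - {c}" for s
    by (simp add: belief_target[where S = S and c = c, OF assms that] fun_eq_iff)
  have "(\<Sum>s\<in>S c - {c}. Max ((\<lambda>y. theta_hat C \<theta> s y - gamma C' S lam s y
          + lam_minus C' S lam c s y + lam c s y) ` cfg D s))
    = (\<Sum>s\<in>S c - {c}. Max (belief C C' S \<theta> lam s ` cfg D s))"
    by (rule sum.cong[OF refl]) (simp only: target)
  then show ?thesis
    unfolding g_block_def source by simp
qed

lemma g_block_lam_star:
  assumes "finite C'" "c \<in> C'" "finite c" "S c \<subseteq> Pow c" "S c - {c} \<noteq> {}"
    and "finite (cfg D c)" "cfg D c \<noteq> {}"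
  shows "g_block C C' S \<theta> D lam c (lam_star C C' S \<theta> D lam c)
    = Max ((\<lambda>x. belief C C' S \<theta> lam c x + (\<Sum>s\<in>S c - {c}. belief C C' S \<theta> lam s (restrict x s)))
           ` cfg D c)"
proof -
  define B where "B s y = theta_hat C \<theta> s y - gamma C' S lam s y + lam_minus C' S lam c s y" for s y
  have K_fin: "finite (S c - {c})"
    using assms(3,4) by (meson finite_Diff finite_Pow_iff finite_subset)
  have restrict_image: "(\<lambda>x. restrict x s) ` cfg D c = cfg D s" if "s \<in> S c - {c}" for s
    using that assms(4) by (intro restrict_image_cfg assms(7)) auto
  have lam_star: "lam_star C C' S \<theta> D lam c s y = - B s y + 1 / real (card (S c - {c}))
      * Max ((\<lambda>x. theta_hat C \<theta> c x + lam_in C' S lam c x + (\<Sum>s\<in>S c - {c}. B s (restrict x s)))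
             ` {x \<in> cfg D c. restrict x s = y})" for s y
    by (simp add: lam_star_def B_def)
  show ?thesis
    using Max_block_update_eq[where A = "\<lambda>x. theta_hat C \<theta> c x + lam_in C' S lam c x" and B = B
        and blk = "lam_star C C' S \<theta> D lam c" and r = "\<lambda>s x. restrict x s",
        OF assms(6,7) K_fin assms(5) restrict_image lam_star]
    unfolding g_block_def belief_joint[OF assms(1,2)] B_def by (simp add: algebra_simps)
qed

theorem proposition2:
  fixes n :: nat
    and D :: "nat \<Rightarrow> 'v set"
    and C C' :: "nat set set"
    and S :: "nat set \<Rightarrow> nat set set"
    and \<theta> :: "nat set \<Rightarrow> (nat \<Rightarrow> 'v) \<Rightarrow> real"
    and lam :: "nat set \<Rightarrow> nat set \<Rightarrow> (nat \<Rightarrow> 'v) \<Rightarrow> real"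
    and c :: "nat set"
  assumes D_fin: "\<And>i. i \<in> {1..n} \<Longrightarrow> finite (D i)"
    and D_ne: "\<And>i. i \<in> {1..n} \<Longrightarrow> D i \<noteq> {}"
    and C_sub: "C \<subseteq> Pow {1..n}"
    and C'_sub: "C' \<subseteq> Pow {1..n}"
    and S_sub: "\<And>c'. c' \<in> C' \<Longrightarrow> S c' \<subseteq> Pow c'"
    and C_cover: "C \<subseteq> C' \<union> (\<Union>c'\<in>C'. S c')"
    and c_in: "c \<in> C'"
    and S_ne: "S c - {c} \<noteq> {}"
  shows "g_block C C' S \<theta> D lam c (lam c) - g_block C C' S \<theta> D lam c (lam_star C C' S \<theta> D lam c)
           = Max (belief C C' S \<theta> lam c ` cfg D c)
             + (\<Sum>s\<in>S c - {c}. Max (belief C C' S \<theta> lam s ` cfg D s))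
             - Max ((\<lambda>x. belief C C' S \<theta> lam c x
                        + (\<Sum>s\<in>S c - {c}. belief C C' S \<theta> lam s (restrict x s))) ` cfg D c)
       \<and> g_block C C' S \<theta> D lam c (lam c) - g_block C C' S \<theta> D lam c (lam_star C C' S \<theta> D lam c) \<ge> 0"
proof -
  have C'_fin: "finite C'"
    using C'_sub by (meson finite_Pow_iff finite_atLeastAtMost finite_subset)
  have c_sub: "c \<subseteq> {1..n}"
    using C'_sub c_in by auto
  then have c_fin: "finite c"
    using finite_subset by blast
  have cfg_c: "finite (cfg D c)" "cfg D c \<noteq> {}"
    using c_sub D_fin D_ne by (auto intro!: finite_cfg cfg_nonempty c_fin)
  have cfg_s: "(\<lambda>x. restrict x s) ` cfg D c = cfg D s" if "s \<in> S c - {c}" for s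
    using that S_sub[OF c_in] by (intro restrict_image_cfg cfg_c(2)) auto
  have "Max ((\<lambda>x. belief C C' S \<theta> lam c x + (\<Sum>s\<in>S c - {c}. belief C C' S \<theta> lam s (restrict x s)))
            ` cfg D c)
      \<le> Max (belief C C' S \<theta> lam c ` cfg D c) + (\<Sum>s\<in>S c - {c}. Max (belief C C' S \<theta> lam s ` cfg D s))"
  proof (rule Max_add_sum_le_add_sum_Max[OF cfg_c])
    show "finite (cfg D s)" if "s \<in> S c - {c}" for s
      using cfg_c(1) unfolding cfg_s[OF that, symmetric] by (rule finite_imageI)
    show "restrict x s \<in> cfg D s" if "s \<in> S c - {c}" "x \<in> cfg D c" for s x
      using that(2) unfolding cfg_s[OF that(1), symmetric] by (rule imageI)
  qed
  then show ?thesis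
    unfolding g_block_current[OF C'_fin c_in]
      g_block_lam_star[where S = S and c = c, OF C'_fin c_in c_fin S_sub[OF c_in] S_ne cfg_c]
    by simp
qed

end
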